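(* Let $R$ be an integral domain and let $A=\mathrm{diag}(\lambda_1,\dots,\lambda_n)\in R^{n\times n}$ be a diagonal matrix. If $A+tI$ has a Smith form over $R[t]$, then every nonzero difference $\lambda_i-\lambda_j$ is a unit of $R$. In particular, for $R=\mathbb{Z}$, a diagonal matrix $A\in\mathbb{Z}^{n\times n}$ has the property that $A+tI$ has a Smith form over $\mathbb{Z}[t]$ if and only if its diagonal entries take at most two distinct values, and, when there are two, they differ by $1$.
   Context: A matrix over a commutative ring $S$ is in Smith form if it is diagonal with diagonal entries $s_1,s_2,\dots$ such that $s_i\mid s_{i+1}$ in $S$; a matrix $B$ has a Smith form over $S$ if $PBQ$ is in Smith form for some invertible matrices $P,Q$ over $S$. *)

theory Defs
  imports "Jordan_Normal_Form.Matrix" "HOL-Computational_Algebra.Polynomial"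
begin

definition is_smith_form :: "'a::comm_ring_1 mat \<Rightarrow> bool" where
  "is_smith_form B \<longleftrightarrow> diagonal_mat B \<and>
     (\<forall>i. Suc i < min (dim_row B) (dim_col B) \<longrightarrow> B $$ (i,i) dvd B $$ (Suc i, Suc i))"

definition has_smith_form :: "'a::comm_ring_1 mat \<Rightarrow> bool" where
  "has_smith_form B \<longleftrightarrow> (\<exists>P Q. P \<in> carrier_mat (dim_row B) (dim_row B) \<and>
     Q \<in> carrier_mat (dim_col B) (dim_col B) \<and> invertible_mat P \<and> invertible_mat Q \<and>
     is_smith_form (P * B * Q))"

definition plus_tI :: "'a::comm_ring_1 mat \<Rightarrow> 'a poly mat" where
  "plus_tI A = map_mat (\<lambda>x. [:x:]) A + [:0, 1:] \<cdot>\<^sub>m 1\<^sub>m (dim_row A)"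

end

theory Submission
  imports Defs
begin

text \<open>Write B = diag(t + c_k). A Smith form P B Q = S with last entry s yields a polynomial
  matrix N = Q M P with B N = s I (M diagonal, S M = s I) such that Q^-1 N P^-1 = M has
  a corner entry 1. N is diagonal with N_kk (t + c_k) = s, and s vanishes at every -c_k.
  Evaluated at t = -c_i, each N_kk is divisible by c_i - c_j when c_i \<noteq> c_j: it vanishes
  there if c_k \<noteq> c_i, and otherwise it vanishes at -c_j. Divisibility at a fixed point is
  preserved under matrix products, so c_i - c_j divides 1.

  Conversely, over any commutative ring diag(p, p + 1) is equivalent to diag(1, p (p + 1)) by
  explicit unimodular 2x2 matrices, so a diagonal matrix with entries in {p, p + 1} can be
  brought into the Smith form diag(1, ..., 1, r, ..., r, p (p + 1), ..., p (p + 1)) by pairing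
  off the two values and permuting. For integers, pairwise differences in {-1, 1} leave room
  for only two consecutive values.\<close>

lemma invertible_matE:
  assumes "invertible_mat A" "A \<in> carrier_mat n n"
  obtains B where "B \<in> carrier_mat n n" "A * B = 1\<^sub>m n" "B * A = 1\<^sub>m n"
proof -
  from assms obtain B where AB: "A * B = 1\<^sub>m n" and BA: "B * A = 1\<^sub>m (dim_row B)"
    unfolding invertible_mat_def inverts_mat_def by auto
  have "dim_col B = n" using arg_cong[OF AB, of dim_col] by simp
  moreover have "dim_row B = n" using arg_cong[OF BA, of dim_col] assms(2) by simp
  ultimately show ?thesis using that AB BA by auto
qed

lemma invertible_matI:
  assumes "A \<in> carrier_mat n n" "B \<in> carrier_mat n n" "A * B = 1\<^sub>m n" "B * A = 1\<^sub>m n"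
  shows "invertible_mat A"
  using assms unfolding invertible_mat_def inverts_mat_def by auto

lemma invertible_mat_one: "invertible_mat (1\<^sub>m n :: 'a::semiring_1 mat)"
  by (rule invertible_matI[of _ n "1\<^sub>m n"]) auto

lemma invertible_mult_mat:
  assumes A: "A \<in> carrier_mat n n" "invertible_mat A" and B: "B \<in> carrier_mat n n" "invertible_mat B"
  shows "invertible_mat (A * B)"
proof -
  obtain A' where A': "A' \<in> carrier_mat n n" "A * A' = 1\<^sub>m n" "A' * A = 1\<^sub>m n"
    using invertible_matE[OF A(2,1)] .
  obtain B' where B': "B' \<in> carrier_mat n n" "B * B' = 1\<^sub>m n" "B' * B = 1\<^sub>m n"
    using invertible_matE[OF B(2,1)] .
  have "A * B * (B' * A') = A * (B * B') * A'"
    using A(1) A'(1) B(1) B'(1) by (simp add: assoc_mult_mat[of _ n n _ n _ n])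
  moreover have "B' * A' * (A * B) = B' * (A' * A) * B"
    using A(1) A'(1) B(1) B'(1) by (simp add: assoc_mult_mat[of _ n n _ n _ n])
  ultimately show ?thesis
    using A(1) A' B(1) B' by (intro invertible_matI[of _ n "B' * A'"]) auto
qed

definition block_diag_mat :: "'a::zero mat \<Rightarrow> 'a mat \<Rightarrow> 'a mat" where
  "block_diag_mat A B =
     four_block_mat A (0\<^sub>m (dim_row A) (dim_col B)) (0\<^sub>m (dim_row B) (dim_col A)) B"

lemma block_diag_mat_carrier:
  "A \<in> carrier_mat n1 m1 \<Longrightarrow> B \<in> carrier_mat n2 m2 \<Longrightarrow>
    block_diag_mat A B \<in> carrier_mat (n1 + n2) (m1 + m2)"
  unfolding block_diag_mat_def by auto

lemma block_diag_mat_mult: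
  fixes A1 :: "'a::semiring_1 mat"
  assumes "A1 \<in> carrier_mat n1 m1" "A2 \<in> carrier_mat n2 m2"
    and "B1 \<in> carrier_mat m1 k1" "B2 \<in> carrier_mat m2 k2"
  shows "block_diag_mat A1 A2 * block_diag_mat B1 B2 = block_diag_mat (A1 * B1) (A2 * B2)"
  using assms unfolding block_diag_mat_def
  by (subst mult_four_block_mat[of _ n1 m1 _ m2 _ n2 _ _ k1 _ k2]) auto

lemma block_diag_mat_one: "block_diag_mat (1\<^sub>m n1) (1\<^sub>m n2) = (1\<^sub>m (n1 + n2) :: 'a::semiring_1 mat)"
  unfolding block_diag_mat_def by simp

lemma invertible_block_diag_mat:
  fixes A :: "'a::semiring_1 mat"
  assumes A: "A \<in> carrier_mat n n" "invertible_mat A" and B: "B \<in> carrier_mat m m" "invertible_mat B"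
  shows "invertible_mat (block_diag_mat A B)"
proof -
  obtain A' where A': "A' \<in> carrier_mat n n" "A * A' = 1\<^sub>m n" "A' * A = 1\<^sub>m n"
    using invertible_matE[OF A(2,1)] .
  obtain B' where B': "B' \<in> carrier_mat m m" "B * B' = 1\<^sub>m m" "B' * B = 1\<^sub>m m"
    using invertible_matE[OF B(2,1)] .
  show ?thesis
    using A(1) A' B(1) B' block_diag_mat_mult[OF A(1) B(1) A'(1) B'(1)]
      block_diag_mat_mult[OF A'(1) B'(1) A(1) B(1)]
    by (intro invertible_matI[of _ "n + m" "block_diag_mat A' B'"])
       (auto simp: block_diag_mat_one intro: block_diag_mat_carrier)
qed

lemma is_smith_form_dvd_last:
  assumes "is_smith_form S" "S \<in> carrier_mat n n" "k < n"
  shows "S $$ (k, k) dvd S $$ (n - 1, n - 1)"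
proof -
  have step: "S $$ (l, l) dvd S $$ (Suc l, Suc l)" if "Suc l < n" for l
    using assms(1,2) that unfolding is_smith_form_def by auto
  have "S $$ (k, k) dvd S $$ (l, l)" if "k \<le> l" "l < n" for l
    using that by (induction l rule: dec_induct) (auto intro: dvd_trans step)
  then show ?thesis using assms(3) by simp
qed

lemma has_smith_form_scalar_multiple:
  fixes B :: "'a::comm_ring_1 mat"
  assumes B: "B \<in> carrier_mat n n" and sf: "has_smith_form B" and n: "0 < n"
  obtains s N X Y where "N \<in> carrier_mat n n" "X \<in> carrier_mat n n" "Y \<in> carrier_mat n n"
    "B * N = s \<cdot>\<^sub>m 1\<^sub>m n" "(X * N * Y) $$ (n - 1, n - 1) = 1"
proof -
  obtain P Q where P: "P \<in> carrier_mat n n" and Q: "Q \<in> carrier_mat n n"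
    and iP: "invertible_mat P" and iQ: "invertible_mat Q" and smith: "is_smith_form (P * B * Q)"
    using sf B unfolding has_smith_form_def by auto
  obtain P' where P': "P' \<in> carrier_mat n n" "P * P' = 1\<^sub>m n" "P' * P = 1\<^sub>m n"
    using invertible_matE[OF iP P] .
  obtain Q' where Q': "Q' \<in> carrier_mat n n" "Q * Q' = 1\<^sub>m n" "Q' * Q = 1\<^sub>m n"
    using invertible_matE[OF iQ Q] .
  define S where "S = P * B * Q"
  define s where "s = S $$ (n - 1, n - 1)"
  have Sc: "S \<in> carrier_mat n n" using P B Q by (simp add: S_def)
  have "\<forall>k<n. \<exists>g. s = S $$ (k, k) * g"
    using is_smith_form_dvd_last[OF smith[folded S_def] Sc] by (auto simp: s_def elim!: dvdE)
  then obtain g where g: "\<And>k. k < n \<Longrightarrow> s = S $$ (k, k) * g k" by metis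
  define M where "M = mat_diag n (g (n - 1 := 1))"
  have S_diag: "diagonal_mat S" using smith by (simp add: S_def is_smith_form_def)
  have "S * M = mat n n (\<lambda>(i, j). S $$ (i, j) * (g (n - 1 := 1)) j)"
    by (simp add: M_def mat_diag_mult_right[OF Sc])
  also have "\<dots> = s \<cdot>\<^sub>m 1\<^sub>m n" (is "?L = ?R")
  proof (rule eq_matI)
    fix i j assume "i < dim_row ?R" "j < dim_col ?R"
    then have "i < n" "j < n" by auto
    then show "?L $$ (i, j) = ?R $$ (i, j)"
      using g[of j, symmetric] S_diag Sc unfolding diagonal_mat_def s_def by auto
  qed auto
  finally have SM: "S * M = s \<cdot>\<^sub>m 1\<^sub>m n" .
  show thesis
  proof
    have Mc: "M \<in> carrier_mat n n" by (simp add: M_def)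
    have "P' * S * Q' = (P' * P) * B * (Q * Q')"
      using B P Q P'(1) Q'(1) by (simp add: S_def assoc_mult_mat[of _ n n _ n _ n])
    then have B_eq: "B = P' * S * Q'" using B P' Q' by simp
    have "B * (Q * M * P) = P' * (S * (Q' * Q) * M) * P"
      unfolding B_eq using Sc P Q P'(1) Q'(1) Mc by (simp add: assoc_mult_mat[of _ n n _ n _ n])
    also have "\<dots> = P' * (s \<cdot>\<^sub>m 1\<^sub>m n) * P" using Sc Q' SM by simp
    also have "\<dots> = s \<cdot>\<^sub>m 1\<^sub>m n"
      using mult_smult_distrib[OF P'(1) one_carrier_mat, of s] mult_smult_assoc_mat[OF P'(1) P, of s] P'
      by simp
    finally show "B * (Q * M * P) = s \<cdot>\<^sub>m 1\<^sub>m n" .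
    have "Q' * (Q * M * P) * P' = (Q' * Q) * M * (P * P')"
      using P Q P'(1) Q'(1) Mc by (simp add: assoc_mult_mat[of _ n n _ n _ n])
    then show "(Q' * (Q * M * P) * P') $$ (n - 1, n - 1) = 1"
      using P' Q' Mc n by (simp add: M_def mat_diag_def)
  qed (use P Q P' Q' in \<open>auto simp: M_def\<close>)
qed

lemma diff_dvd_poly_diff: "x - y dvd poly f x - poly f (y :: 'a::comm_ring_1)"
proof (induction f)
  case (pCons c f)
  have "poly (pCons c f) x - poly (pCons c f) y = (x - y) * poly f x + y * (poly f x - poly f y)"
    by (simp add: algebra_simps)
  with pCons.IH show ?case by simp
qed simp

lemma diff_dvd_poly_linear_cofactor:
  fixes a b c :: "'a::idom"
  assumes "poly ([:c, 1:] * f) (- a) = 0" "poly ([:c, 1:] * f) (- b) = 0" "a \<noteq> b"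
  shows "a - b dvd poly f (- a)"
proof -
  have eval: "poly ([:c, 1:] * f) (- z) = (c - z) * poly f (- z)" for z
    by (simp add: algebra_simps)
  show ?thesis
  proof (cases "c = a")
    case True
    with assms(2,3) have "poly f (- b) = 0" unfolding eval by simp
    then have "b - a dvd poly f (- a)" using diff_dvd_poly_diff[of "- a" "- b" f] by simp
    then show ?thesis by (metis minus_diff_eq minus_dvd_iff)
  next
    case False
    with assms(1) show ?thesis unfolding eval by simp
  qed
qed

lemma dvd_poly_mult_mat_entry:
  fixes N :: "'a::comm_ring_1 poly mat"
  assumes X: "X \<in> carrier_mat k n" and N: "N \<in> carrier_mat n m" and Y: "Y \<in> carrier_mat m l"
    and dvd_N: "\<And>i j. i < n \<Longrightarrow> j < m \<Longrightarrow> d dvd poly (N $$ (i, j)) x"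
    and i: "i < k" and j: "j < l"
  shows "d dvd poly ((X * N * Y) $$ (i, j)) x"
proof -
  define Z where "Z = X * N"
  have Z: "Z \<in> carrier_mat k m" using X N by (simp add: Z_def)
  have dvd_Z: "d dvd poly (Z $$ (i, r)) x" if "r < m" for r
    using X N that i dvd_N by (auto simp: Z_def scalar_prod_def poly_sum intro!: dvd_sum dvd_mult)
  show ?thesis
    using Z Y i j dvd_Z by (auto simp: Z_def[symmetric] scalar_prod_def poly_sum intro!: dvd_sum dvd_mult2)
qed

lemma has_smith_form_monic_linear_diag:
  fixes c :: "nat \<Rightarrow> 'a::idom"
  assumes sf: "has_smith_form (mat_diag n (\<lambda>k. [:c k, 1:]))"
    and i: "i < n" and j: "j < n" and ne: "c i \<noteq> c j"
  shows "c i - c j dvd 1"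
proof -
  from i have "0 < n" by simp
  then obtain s N X Y where N: "N \<in> carrier_mat n n" and X: "X \<in> carrier_mat n n"
    and Y: "Y \<in> carrier_mat n n" and BN: "mat_diag n (\<lambda>k. [:c k, 1:]) * N = s \<cdot>\<^sub>m 1\<^sub>m n"
    and corner: "(X * N * Y) $$ (n - 1, n - 1) = 1"
    by (rule has_smith_form_scalar_multiple[OF mat_diag_dim sf])
  have entry: "[:c k, 1:] * N $$ (k, l) = (if k = l then s else 0)" if "k < n" "l < n" for k l
    using arg_cong[OF BN, of "\<lambda>A. A $$ (k, l)"] that N by (simp add: mat_diag_mult_left[OF N])
  have root: "poly s (- c k) = 0" if "k < n" for k
  proof -
    have "[:c k, 1:] * N $$ (k, k) = s" using entry[OF that that] by (simp only: simp_thms if_True)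
    then show ?thesis by (simp only: poly_mult flip: \<open>_ = s\<close>) simp
  qed
  have "c i - c j dvd poly (N $$ (k, l)) (- c i)" if k: "k < n" and l: "l < n" for k l
  proof (cases "k = l")
    case True
    with entry[OF k l] root[OF i] root[OF j] ne show ?thesis
      by (intro diff_dvd_poly_linear_cofactor[where c = "c k"]) simp_all
  next
    case False
    with entry[OF k l] have "N $$ (k, l) = 0" by (metis mult_eq_0_iff pCons_eq_0_iff one_neq_zero)
    then show ?thesis by simp
  qed
  from dvd_poly_mult_mat_entry[OF X N Y this] i
  have "c i - c j dvd poly ((X * N * Y) $$ (n - 1, n - 1)) (- c i)" by simp
  then show ?thesis unfolding corner by simp
qed

definition equivalent_mat :: "'a::comm_ring_1 mat \<Rightarrow> 'a mat \<Rightarrow> bool" where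
  "equivalent_mat A B \<longleftrightarrow>
    (\<exists>n P Q. A \<in> carrier_mat n n \<and> P \<in> carrier_mat n n \<and> Q \<in> carrier_mat n n \<and>
      invertible_mat P \<and> invertible_mat Q \<and> P * A * Q = B)"

lemma equivalent_mat_refl: "A \<in> carrier_mat n n \<Longrightarrow> equivalent_mat A A"
  unfolding equivalent_mat_def by (intro exI[of _ n] exI[of _ "1\<^sub>m n"]) (auto simp: invertible_mat_one)

lemma equivalent_mat_trans [trans]:
  assumes "equivalent_mat A B" "equivalent_mat B C"
  shows "equivalent_mat A C"
proof -
  obtain n P Q where A: "A \<in> carrier_mat n n" and PQ: "P \<in> carrier_mat n n" "Q \<in> carrier_mat n n"
    "invertible_mat P" "invertible_mat Q" and B: "P * A * Q = B"
    using assms(1) unfolding equivalent_mat_def by auto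
  obtain m P' Q' where "B \<in> carrier_mat m m" and PQ': "P' \<in> carrier_mat m m" "Q' \<in> carrier_mat m m"
    "invertible_mat P'" "invertible_mat Q'" and C: "P' * B * Q' = C"
    using assms(2) unfolding equivalent_mat_def by auto
  moreover have "B \<in> carrier_mat n n" using A PQ B by auto
  ultimately have m: "m = n" by auto
  have "(P' * P) * A * (Q * Q') = P' * (P * A * Q) * Q'"
    using A PQ PQ' m by (simp add: assoc_mult_mat[of _ n n _ n _ n])
  then show ?thesis
    unfolding equivalent_mat_def using A PQ PQ' m B C
    by (intro exI[of _ n] exI[of _ "P' * P"] exI[of _ "Q * Q'"]) (auto intro: invertible_mult_mat)
qed

lemma equivalent_mat_block_diag:
  assumes "equivalent_mat A B" "equivalent_mat C D"
  shows "equivalent_mat (block_diag_mat A C) (block_diag_mat B D)"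
proof -
  obtain n P Q where A: "A \<in> carrier_mat n n" and PQ: "P \<in> carrier_mat n n" "Q \<in> carrier_mat n n"
    "invertible_mat P" "invertible_mat Q" and B: "P * A * Q = B"
    using assms(1) unfolding equivalent_mat_def by auto
  obtain m P' Q' where C: "C \<in> carrier_mat m m" and PQ': "P' \<in> carrier_mat m m" "Q' \<in> carrier_mat m m"
    "invertible_mat P'" "invertible_mat Q'" and D: "P' * C * Q' = D"
    using assms(2) unfolding equivalent_mat_def by auto
  have "block_diag_mat P P' * block_diag_mat A C * block_diag_mat Q Q' = block_diag_mat B D"
    using A C PQ PQ' B D by (simp add: block_diag_mat_mult[of _ n n _ m m])
  then show ?thesis
    unfolding equivalent_mat_def using A C PQ PQ'
    by (intro exI[of _ "n + m"] exI[of _ "block_diag_mat P P'"] exI[of _ "block_diag_mat Q Q'"])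
       (auto intro: invertible_block_diag_mat block_diag_mat_carrier)
qed

lemma has_smith_form_if_equivalent_mat:
  assumes "equivalent_mat A S" "is_smith_form S"
  shows "has_smith_form A"
  using assms unfolding equivalent_mat_def has_smith_form_def by auto

definition diag_list :: "'a::zero list \<Rightarrow> 'a mat" where
  "diag_list xs = mat_diag (length xs) ((!) xs)"

lemma diag_list_carrier: "diag_list xs \<in> carrier_mat (length xs) (length xs)"
  by (simp add: diag_list_def)

lemma diag_list_append: "diag_list (xs @ ys) = block_diag_mat (diag_list xs) (diag_list ys)"
  unfolding diag_list_def block_diag_mat_def mat_diag_def by (rule eq_matI) (auto simp: nth_append)

lemma equivalent_mat_diag_list_infix:
  assumes "equivalent_mat (diag_list ys) (diag_list ys')"
  shows "equivalent_mat (diag_list (xs @ ys @ zs)) (diag_list (xs @ ys' @ zs))"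
  unfolding diag_list_append
  by (intro equivalent_mat_block_diag equivalent_mat_refl[OF diag_list_carrier] assms)

definition mat2 :: "'a \<Rightarrow> 'a \<Rightarrow> 'a \<Rightarrow> 'a \<Rightarrow> 'a mat" where
  "mat2 a b c d = mat 2 2 (\<lambda>(i, j). if i = 0 then (if j = 0 then a else b) else (if j = 0 then c else d))"

lemma less_2_cases: "(i::nat) < 2 \<Longrightarrow> i = 0 \<or> i = 1" by arith

lemma mat2_carrier: "mat2 a b c d \<in> carrier_mat 2 2"
  by (simp add: mat2_def)

lemma mat2_mult:
  "mat2 a b c d * mat2 e f g h = mat2 (a*e + b*g) (a*f + b*h) (c*e + d*g) (c*f + (d::'a::semiring_1)*h)"
  (is "?L = ?R")
proof (rule eq_matI)
  fix i j assume "i < dim_row ?R" "j < dim_col ?R"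
  then have "i < 2" "j < 2" by (auto simp: mat2_def)
  then show "?L $$ (i, j) = ?R $$ (i, j)"
    using less_2_cases[of i] less_2_cases[of j] by (auto simp: mat2_def scalar_prod_def numeral_2_eq_2)
qed (auto simp: mat2_def)

lemma one_mat_2: "1\<^sub>m 2 = (mat2 1 0 0 1 :: 'a::semiring_1 mat)"
  by (rule eq_matI) (auto simp: mat2_def)

lemma diag_list_pair: "diag_list [x, y] = mat2 x 0 0 y"
  by (rule eq_matI) (auto simp: diag_list_def mat_diag_def mat2_def dest!: less_2_cases)

lemma equivalent_mat_diag_swap: "equivalent_mat (diag_list [x, y]) (diag_list [y, x :: 'a::comm_ring_1])"
proof -
  have "invertible_mat (mat2 0 1 1 (0::'a))"
    by (rule invertible_matI[OF mat2_carrier mat2_carrier[of 0 1 1 0]]) (simp_all add: mat2_mult one_mat_2)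
  moreover have "mat2 0 1 1 0 * diag_list [x, y] * mat2 0 1 1 0 = diag_list [y, x]"
    by (simp add: diag_list_pair mat2_mult)
  ultimately show ?thesis unfolding equivalent_mat_def
    by (intro exI[of _ 2] exI[of _ "mat2 0 1 1 0"]) (auto simp: diag_list_pair mat2_carrier)
qed

lemma equivalent_mat_diag_consecutive:
  "equivalent_mat (diag_list [p, p + 1]) (diag_list [1, p * (p + 1 :: 'a::comm_ring_1)])"
proof -
  define q where "q = p + 1"
  have "invertible_mat (mat2 (-1) 1 (-q) (q - 1))"
    by (rule invertible_matI[OF mat2_carrier mat2_carrier[of "q - 1" "-1" q "-1"]])
       (simp_all add: mat2_mult one_mat_2 algebra_simps)
  moreover have "invertible_mat (mat2 1 (-q) 1 (1 - q))"
    by (rule invertible_matI[OF mat2_carrier mat2_carrier[of "1 - q" q "-1" 1]])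
       (simp_all add: mat2_mult one_mat_2 algebra_simps)
  moreover have "mat2 (-1) 1 (-q) (q - 1) * diag_list [p, q] * mat2 1 (-q) 1 (1 - q) = diag_list [1, p * q]"
    by (simp add: diag_list_pair mat2_mult q_def algebra_simps)
  ultimately show ?thesis unfolding equivalent_mat_def q_def[symmetric]
    by (intro exI[of _ 2] exI[of _ "mat2 (-1) 1 (-q) (q - 1)"] exI[of _ "mat2 1 (-q) 1 (1 - q)"])
       (auto simp: diag_list_pair mat2_carrier)
qed

lemma equivalent_mat_diag_move:
  "equivalent_mat (diag_list (xs @ x # ws @ zs)) (diag_list (xs @ ws @ x # zs))"
proof (induction ws arbitrary: xs)
  case Nil
  show ?case using equivalent_mat_refl[OF diag_list_carrier] by simp
next
  case (Cons w ws)
  have "equivalent_mat (diag_list (xs @ [x, w] @ ws @ zs)) (diag_list (xs @ [w, x] @ ws @ zs))"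
    by (rule equivalent_mat_diag_list_infix[OF equivalent_mat_diag_swap])
  moreover have "equivalent_mat (diag_list ((xs @ [w]) @ x # ws @ zs)) (diag_list ((xs @ [w]) @ ws @ x # zs))"
    by (rule Cons.IH)
  ultimately show ?case by (auto intro: equivalent_mat_trans)
qed

lemma equivalent_mat_diag_distinct_consecutive:
  assumes "x \<in> {p, p + 1}" "y \<in> {p, p + 1}" "x \<noteq> y"
  shows "equivalent_mat (diag_list [x, y]) (diag_list [1, p * (p + 1 :: 'a::comm_ring_1)])"
proof (cases "x = p")
  case True
  with assms show ?thesis using equivalent_mat_diag_consecutive by auto
next
  case False
  with assms show ?thesis
    using equivalent_mat_trans[OF equivalent_mat_diag_swap equivalent_mat_diag_consecutive] by auto
qed

definition smith_diag_list :: "nat \<Rightarrow> nat \<Rightarrow> 'a \<Rightarrow> 'a \<Rightarrow> 'a::one list" where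
  "smith_diag_list c d r w = replicate c 1 @ replicate d r @ replicate c w"

lemma is_smith_form_smith_diag_list:
  assumes "r dvd w"
  shows "is_smith_form (diag_list (smith_diag_list c d r (w :: 'a::comm_ring_1)))"
proof -
  have "smith_diag_list c d r w ! i dvd smith_diag_list c d r w ! Suc i"
    if "Suc i < length (smith_diag_list c d r w)" for i
    using that assms by (auto simp: smith_diag_list_def nth_append)
  then show ?thesis
    unfolding is_smith_form_def by (auto simp: diag_list_def mat_diag_def diagonal_mat_def)
qed

lemma equivalent_mat_diag_list_consecutive:
  fixes p :: "'a::comm_ring_1"
  assumes "set xs \<subseteq> {p, p + 1}"
  shows "\<exists>c d r. r \<in> {p, p + 1} \<and>
    equivalent_mat (diag_list xs) (diag_list (smith_diag_list c d r (p * (p + 1))))"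
  using assms
proof (induction xs)
  case Nil
  show ?case
    by (intro exI[of _ 0] exI[of _ 0] exI[of _ p])
       (simp add: smith_diag_list_def equivalent_mat_refl[OF diag_list_carrier])
next
  case (Cons x xs)
  define w where "w = p * (p + 1)"
  from Cons obtain c d r where r: "r \<in> {p, p + 1}"
    and IH: "equivalent_mat (diag_list xs) (diag_list (smith_diag_list c d r w))"
    by (auto simp: w_def)
  have x: "x \<in> {p, p + 1}" using Cons.prems by auto
  have "equivalent_mat (diag_list ([x] @ xs)) (diag_list ([x] @ smith_diag_list c d r w))"
    unfolding diag_list_append by (intro equivalent_mat_block_diag equivalent_mat_refl[OF diag_list_carrier] IH)
  also have "equivalent_mat \<dots> (diag_list (replicate c 1 @ x # replicate d r @ replicate c w))"
    using equivalent_mat_diag_move[of "[]" x "replicate c 1"] by (simp add: smith_diag_list_def)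
  finally have x_moved: "equivalent_mat (diag_list (x # xs))
    (diag_list (replicate c 1 @ x # replicate d r @ replicate c w))" by simp
  show ?case
    \<comment> \<open>x either joins the block of r's or pairs off with one r into the entries 1 and w\<close>
  proof (cases "d = 0 \<or> x = r")
    case True
    then have "replicate c 1 @ x # replicate d r @ replicate c w = smith_diag_list c (Suc d) x w"
      by (auto simp: smith_diag_list_def)
    with x_moved x show ?thesis unfolding w_def by auto
  next
    case False
    then obtain d' where d: "d = Suc d'" and xr: "x \<noteq> r" by (cases d) auto
    note x_moved
    also have "equivalent_mat (diag_list (replicate c 1 @ x # replicate d r @ replicate c w))
        (diag_list (replicate c 1 @ [1, w] @ replicate d' r @ replicate c w))"
      using equivalent_mat_diag_list_infix[OF equivalent_mat_diag_distinct_consecutive[OF x r xr]]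
      by (simp add: d w_def)
    also have "equivalent_mat \<dots> (diag_list ((replicate c 1 @ [1]) @ replicate d' r @ w # replicate c w))"
      using equivalent_mat_diag_move[of "replicate c 1 @ [1]" w "replicate d' r"] by simp
    also have "\<dots> = diag_list (smith_diag_list (Suc c) d' r w)"
      by (simp add: smith_diag_list_def replicate_append_same[symmetric])
    finally show ?thesis using r unfolding w_def by blast
  qed
qed

lemma has_smith_form_diag_list_consecutive:
  fixes p :: "'a::comm_ring_1"
  assumes "set xs \<subseteq> {p, p + 1}"
  shows "has_smith_form (diag_list xs)"
proof -
  obtain c d r where r: "r \<in> {p, p + 1}"
    and equiv: "equivalent_mat (diag_list xs) (diag_list (smith_diag_list c d r (p * (p + 1))))"
    using equivalent_mat_diag_list_consecutive[OF assms] by blast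
  from r have "r dvd p * (p + 1)" by auto
  with equiv show ?thesis by (metis has_smith_form_if_equivalent_mat is_smith_form_smith_diag_list)
qed

lemma diag_list_map_upt: "diag_list (map f [0..<n]) = mat_diag n f"
  by (intro eq_matI) (auto simp: diag_list_def mat_diag_def)

lemma plus_tI_diagonal:
  assumes "A \<in> carrier_mat n n" "diagonal_mat A"
  shows "plus_tI A = mat_diag n (\<lambda>k. [:A $$ (k, k), 1:])"
  using assms by (intro eq_matI) (auto simp: plus_tI_def mat_diag_def diagonal_mat_def one_pCons)

lemma int_set_pairwise_dist_1_subset:
  fixes V :: "int set"
  assumes dist: "\<And>x y. x \<in> V \<Longrightarrow> y \<in> V \<Longrightarrow> x \<noteq> y \<Longrightarrow> \<bar>x - y\<bar> = 1"
  obtains a where "V \<subseteq> {a, a + 1}"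
proof (cases "V = {}")
  case False
  then obtain v where v: "v \<in> V" by blast
  have "V \<subseteq> {v - 1, v, v + 1}" using dist[OF _ v] by fastforce
  moreover have "\<not> (v - 1 \<in> V \<and> v + 1 \<in> V)" using dist[of "v - 1" "v + 1"] by auto
  ultimately have "V \<subseteq> {v - 1, v - 1 + 1} \<or> V \<subseteq> {v, v + 1}" by auto
  then show ?thesis using that by blast
qed (use that in blast)

lemma card_le_2_pairwise_dist_1_iff:
  fixes V :: "int set"
  assumes "finite V"
  shows "(card V \<le> 2 \<and> (card V = 2 \<longrightarrow> (\<forall>x\<in>V. \<forall>y\<in>V. x \<noteq> y \<longrightarrow> \<bar>x - y\<bar> = 1)))
    \<longleftrightarrow> (\<forall>x\<in>V. \<forall>y\<in>V. x \<noteq> y \<longrightarrow> \<bar>x - y\<bar> = 1)"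
proof (cases "card V \<le> 1")
  case True
  then have "\<forall>x\<in>V. \<forall>y\<in>V. x = y" using card_le_Suc0_iff_eq[OF assms] by simp
  with True show ?thesis by auto
next
  case False
  show ?thesis
  proof
    assume "\<forall>x\<in>V. \<forall>y\<in>V. x \<noteq> y \<longrightarrow> \<bar>x - y\<bar> = 1"
    then obtain a where "V \<subseteq> {a, a + 1}" by (metis int_set_pairwise_dist_1_subset)
    then have "card V \<le> card {a, a + 1}" by (intro card_mono) simp_all
    with \<open>\<forall>x\<in>V. _\<close> show "card V \<le> 2 \<and> (card V = 2 \<longrightarrow> (\<forall>x\<in>V. \<forall>y\<in>V. x \<noteq> y \<longrightarrow> \<bar>x - y\<bar> = 1))"
      by simp
  qed (use False in auto)
qed

lemma has_smith_form_plus_tI_int_iff: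
  fixes A :: "int mat"
  assumes A: "A \<in> carrier_mat n n" and diag: "diagonal_mat A"
  shows "has_smith_form (plus_tI A) \<longleftrightarrow>
    (\<forall>i<n. \<forall>j<n. A $$ (i, i) \<noteq> A $$ (j, j) \<longrightarrow> \<bar>A $$ (i, i) - A $$ (j, j)\<bar> = 1)"
proof
  assume "has_smith_form (plus_tI A)"
  then show "\<forall>i<n. \<forall>j<n. A $$ (i, i) \<noteq> A $$ (j, j) \<longrightarrow> \<bar>A $$ (i, i) - A $$ (j, j)\<bar> = 1"
    using has_smith_form_monic_linear_diag[of n "\<lambda>k. A $$ (k, k)"]
    unfolding plus_tI_diagonal[OF A diag] by (simp add: zdvd1_eq)
next
  assume "\<forall>i<n. \<forall>j<n. A $$ (i, i) \<noteq> A $$ (j, j) \<longrightarrow> \<bar>A $$ (i, i) - A $$ (j, j)\<bar> = 1"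
  then have "\<And>x y. x \<in> {A $$ (k, k) | k. k < n} \<Longrightarrow> y \<in> {A $$ (k, k) | k. k < n} \<Longrightarrow> x \<noteq> y \<Longrightarrow>
      \<bar>x - y\<bar> = 1" by blast
  then obtain a where "{A $$ (k, k) | k. k < n} \<subseteq> {a, a + 1}"
    by (rule int_set_pairwise_dist_1_subset)
  then have "set (map (\<lambda>k. [:A $$ (k, k), 1:]) [0..<n]) \<subseteq> {[:a, 1:], [:a, 1:] + 1}"
    by (fastforce simp: one_pCons)
  then have "has_smith_form (diag_list (map (\<lambda>k. [:A $$ (k, k), 1:]) [0..<n]))"
    by (rule has_smith_form_diag_list_consecutive)
  then show "has_smith_form (plus_tI A)"
    by (simp add: diag_list_map_upt plus_tI_diagonal[OF A diag])
qed

theorem proposition8p9: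
  shows "(\<forall>(A :: 'a::idom mat) n. A \<in> carrier_mat n n \<longrightarrow> diagonal_mat A \<longrightarrow>
            has_smith_form (plus_tI A) \<longrightarrow>
            (\<forall>i<n. \<forall>j<n. A $$ (i,i) \<noteq> A $$ (j,j) \<longrightarrow> (A $$ (i,i) - A $$ (j,j)) dvd 1))
       \<and> (\<forall>(A :: int mat) n. A \<in> carrier_mat n n \<longrightarrow> diagonal_mat A \<longrightarrow>
            (has_smith_form (plus_tI A) \<longleftrightarrow>
              (card {A $$ (i,i) | i. i < n} \<le> 2 \<and>
               (card {A $$ (i,i) | i. i < n} = 2 \<longrightarrow>
                  (\<forall>i<n. \<forall>j<n. A $$ (i,i) \<noteq> A $$ (j,j) \<longrightarrow> \<bar>A $$ (i,i) - A $$ (j,j)\<bar> = 1)))))"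
proof (intro conjI allI impI)
  fix A :: "'a mat" and n i j
  assume "A \<in> carrier_mat n n" "diagonal_mat A" "has_smith_form (plus_tI A)"
    and "i < n" "j < n" "A $$ (i, i) \<noteq> A $$ (j, j)"
  then show "A $$ (i, i) - A $$ (j, j) dvd 1"
    using has_smith_form_monic_linear_diag[of n "\<lambda>k. A $$ (k, k)"] plus_tI_diagonal[of A n] by simp
next
  fix A :: "int mat" and n
  assume A: "A \<in> carrier_mat n n" and diag: "diagonal_mat A"
  define V where "V = {A $$ (i, i) | i. i < n}"
  have pairwise_iff: "(\<forall>i<n. \<forall>j<n. A $$ (i, i) \<noteq> A $$ (j, j) \<longrightarrow> \<bar>A $$ (i, i) - A $$ (j, j)\<bar> = 1)
      \<longleftrightarrow> (\<forall>x\<in>V. \<forall>y\<in>V. x \<noteq> y \<longrightarrow> \<bar>x - y\<bar> = 1)"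
    unfolding V_def by blast
  show "has_smith_form (plus_tI A) \<longleftrightarrow>
      (card {A $$ (i, i) | i. i < n} \<le> 2 \<and> (card {A $$ (i, i) | i. i < n} = 2 \<longrightarrow>
        (\<forall>i<n. \<forall>j<n. A $$ (i, i) \<noteq> A $$ (j, j) \<longrightarrow> \<bar>A $$ (i, i) - A $$ (j, j)\<bar> = 1)))"
    unfolding V_def[symmetric] pairwise_iff has_smith_form_plus_tI_int_iff[OF A diag]
    by (rule card_le_2_pairwise_dist_1_iff[symmetric]) (simp add: V_def)
qed

end
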